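(* There exists a locally compact groupoid $G$ over a base space $X$, with $G$ even compact, whose range map $r:G\to X$ is open, but such that $G$ admits no Haar system.
   Context: A groupoid over a set $X$ is a small category with object set $X$ in which every arrow is invertible; $G$ denotes its set of arrows, with range and source maps $r,s:G\to X$, identity map $\varepsilon:X\to G$, composition $m$ defined on the set $G^{(2)}=\{(\alpha,\beta)\in G\times G: s(\alpha)=r(\beta)\}$ of composable pairs, and inversion $\iota$. A topological groupoid is a groupoid with topologies on $G$ and $X$ making $r,s,\varepsilon,m,\iota$ continuous ($G^{(2)}$ carries the subspace topology of $G\times G$). A locally compact groupoid is a topological groupoid in which $G$ and $X$ are locally compact Hausdorff spaces. For $x\in X$ write $G^x=\{g\in G: r(g)=x\}$ and $G_y^x=\{g\in G: s(g)=y,\ r(g)=x\}$. A Haar system on a locally compact groupoid $G$ is a family $(\mu^x)_{x\in X}$ of Radon measures on $G$ such that (a) $\operatorname{supp}(\mu^x)=G^x$ for every $x\in X$; (b) $\int_G\phi(\alpha g)\,d\mu^{y}(g)=\int_G\phi(g)\,d\mu^{x}(g)$ for every $\phi\in C_c(G)$ and every $\alpha\in G_y^x$; (c) for every $\phi\in C_c(G)$ the map $x\mapsto\int_G\phi(g)\,d\mu^x(g)$ is continuous on $X$. *)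

theory Defs
  imports "HOL-Analysis.Analysis"
begin

definition groupoid ::
  "'g set \<Rightarrow> 'x set \<Rightarrow> ('g \<Rightarrow> 'x) \<Rightarrow> ('g \<Rightarrow> 'x) \<Rightarrow> ('x \<Rightarrow> 'g)
   \<Rightarrow> ('g \<Rightarrow> 'g \<Rightarrow> 'g) \<Rightarrow> ('g \<Rightarrow> 'g) \<Rightarrow> bool" where
  "groupoid G X r s e m iv \<longleftrightarrow>
     (\<forall>a\<in>G. r a \<in> X \<and> s a \<in> X) \<and>
     (\<forall>x\<in>X. e x \<in> G \<and> r (e x) = x \<and> s (e x) = x) \<and>
     (\<forall>a\<in>G. \<forall>b\<in>G. s a = r b \<longrightarrow> m a b \<in> G \<and> r (m a b) = r a \<and> s (m a b) = s b) \<and>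
     (\<forall>a\<in>G. \<forall>b\<in>G. \<forall>c\<in>G. s a = r b \<and> s b = r c \<longrightarrow> m (m a b) c = m a (m b c)) \<and>
     (\<forall>a\<in>G. m (e (r a)) a = a \<and> m a (e (s a)) = a) \<and>
     (\<forall>a\<in>G. iv a \<in> G \<and> r (iv a) = s a \<and> s (iv a) = r a \<and>
              m a (iv a) = e (r a) \<and> m (iv a) a = e (s a))"

definition composable_pairs :: "'g set \<Rightarrow> ('g \<Rightarrow> 'x) \<Rightarrow> ('g \<Rightarrow> 'x) \<Rightarrow> ('g \<times> 'g) set" where
  "composable_pairs G r s = {(a, b). a \<in> G \<and> b \<in> G \<and> s a = r b}"

definition topological_groupoid ::
  "'g topology \<Rightarrow> 'x topology \<Rightarrow> ('g \<Rightarrow> 'x) \<Rightarrow> ('g \<Rightarrow> 'x) \<Rightarrow> ('x \<Rightarrow> 'g)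
   \<Rightarrow> ('g \<Rightarrow> 'g \<Rightarrow> 'g) \<Rightarrow> ('g \<Rightarrow> 'g) \<Rightarrow> bool" where
  "topological_groupoid TG TX r s e m iv \<longleftrightarrow>
     groupoid (topspace TG) (topspace TX) r s e m iv \<and>
     continuous_map TG TX r \<and> continuous_map TG TX s \<and> continuous_map TX TG e \<and>
     continuous_map TG TG iv \<and>
     continuous_map (subtopology (prod_topology TG TG) (composable_pairs (topspace TG) r s)) TG
        (\<lambda>(a, b). m a b)"

definition locally_compact_groupoid ::
  "'g topology \<Rightarrow> 'x topology \<Rightarrow> ('g \<Rightarrow> 'x) \<Rightarrow> ('g \<Rightarrow> 'x) \<Rightarrow> ('x \<Rightarrow> 'g)
   \<Rightarrow> ('g \<Rightarrow> 'g \<Rightarrow> 'g) \<Rightarrow> ('g \<Rightarrow> 'g) \<Rightarrow> bool" where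
  "locally_compact_groupoid TG TX r s e m iv \<longleftrightarrow>
     topological_groupoid TG TX r s e m iv \<and>
     locally_compact_space TG \<and> Hausdorff_space TG \<and>
     locally_compact_space TX \<and> Hausdorff_space TX"

definition borel_sets_of :: "'a topology \<Rightarrow> 'a set set" where
  "borel_sets_of T = sigma_sets (topspace T) {U. openin T U}"

definition radon_measure :: "'a topology \<Rightarrow> 'a measure \<Rightarrow> bool" where
  "radon_measure T M \<longleftrightarrow>
     space M = topspace T \<and> sets M = borel_sets_of T \<and>
     (\<forall>x\<in>topspace T. \<exists>U. openin T U \<and> x \<in> U \<and> emeasure M U < \<infinity>) \<and>
     (\<forall>A\<in>sets M. emeasure M A = (INF U\<in>{U. openin T U \<and> A \<subseteq> U}. emeasure M U)) \<and>
     (\<forall>U. openin T U \<longrightarrow> emeasure M U = (SUP K\<in>{K. compactin T K \<and> K \<subseteq> U}. emeasure M K))"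

definition measure_support :: "'a topology \<Rightarrow> 'a measure \<Rightarrow> 'a set" where
  "measure_support T M = {x \<in> topspace T. \<forall>U. openin T U \<and> x \<in> U \<longrightarrow> emeasure M U > 0}"

definition Cc :: "'a topology \<Rightarrow> ('a \<Rightarrow> real) set" where
  "Cc T = {\<phi>. continuous_map T euclideanreal \<phi> \<and>
               compactin T (T closure_of {x \<in> topspace T. \<phi> x \<noteq> 0})}"

definition haar_system ::
  "'g topology \<Rightarrow> 'x topology \<Rightarrow> ('g \<Rightarrow> 'x) \<Rightarrow> ('g \<Rightarrow> 'x)
   \<Rightarrow> ('g \<Rightarrow> 'g \<Rightarrow> 'g) \<Rightarrow> ('x \<Rightarrow> 'g measure) \<Rightarrow> bool" where
  "haar_system TG TX r s m \<mu> \<longleftrightarrow>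
     (\<forall>x\<in>topspace TX. radon_measure TG (\<mu> x)) \<and>
     (\<forall>x\<in>topspace TX. measure_support TG (\<mu> x) = {g \<in> topspace TG. r g = x}) \<and>
     (\<forall>\<phi>\<in>Cc TG. \<forall>\<alpha>\<in>topspace TG.
        (\<integral>g. (if r g = s \<alpha> then \<phi> (m \<alpha> g) else 0) \<partial>(\<mu> (s \<alpha>))) = (\<integral>g. \<phi> g \<partial>(\<mu> (r \<alpha>)))) \<and>
     (\<forall>\<phi>\<in>Cc TG. continuous_map TX euclideanreal (\<lambda>x. \<integral>g. \<phi> g \<partial>(\<mu> x)))"

end

theory Submission
  imports Defs
begin

text \<open>Let \<open>X\<close> be the one-point compactification of an uncountable discrete space and \<open>G = X \<times> X\<close>
  the pair groupoid: it is compact Hausdorff and its range map is a projection, hence open.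
  Fix an isolated point \<open>x\<close>. For a Haar system, \<open>\<mu>\<^sup>x\<close> would be locally finite at the arrow
  \<open>(x, \<infinity>)\<close>, so some neighbourhood of finite measure contains the uncountably many arrows
  \<open>(x, y)\<close> with \<open>y\<close> isolated. These arrows are isolated points of \<open>G\<^sup>x = supp \<mu>\<^sup>x\<close>, so each
  carries positive mass, which a finite measure cannot accommodate.\<close>

lemma countable_isolated_support_in_finite_open:
  assumes M: "radon_measure T M" and U: "openin T U" "emeasure M U < \<infinity>"
  shows "countable {y \<in> U \<inter> measure_support T M. openin T {y}}"
proof -
  have open_sets: "A \<in> sets M" if "openin T A" for A
    using M that by (auto simp: radon_measure_def borel_sets_of_def)
  have space_M: "space M = topspace T"
    using M by (simp add: radon_measure_def)
  have U_sets: "U \<in> sets M"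
    by (rule open_sets[OF U(1)])
  have "U \<subseteq> space M"
    using U(1) openin_subset space_M by blast
  interpret N: finite_measure "restrict_space M U"
    using U(2) U_sets by (intro finite_measureI)
      (simp add: space_restrict_space emeasure_restrict_space Int_absorb2 less_top)
  have "{y \<in> U \<inter> measure_support T M. openin T {y}} \<subseteq> {y. measure (restrict_space M U) {y} \<noteq> 0}"
  proof safe
    fix y assume y: "y \<in> U" "y \<in> measure_support T M" "openin T {y}"
    then have pos: "emeasure M {y} > 0"
      by (auto simp: measure_support_def)
    have "emeasure M {y} \<le> emeasure M U"
      using y(1) U_sets by (intro emeasure_mono) auto
    then have "emeasure M {y} < \<infinity>"
      using U(2) by simp
    then have "measure M {y} > 0"
      using pos by (simp add: measure_def enn2real_positive_iff)
    moreover assume "measure (restrict_space M U) {y} = 0"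
    ultimately show False
      using y(1) U_sets by (simp add: measure_restrict_space)
  qed
  then show ?thesis
    using N.countable_support countable_subset by blast
qed

text \<open>The point \<open>p\<close> plays the role of \<open>\<infinity>\<close>: this is the one-point compactification of the
  discrete space \<open>UNIV - {p}\<close>.\<close>

definition Fort_topology :: "'a \<Rightarrow> 'a topology" where
  "Fort_topology p = topology (\<lambda>U. p \<in> U \<longrightarrow> finite (- U))"

lemma openin_Fort_topology: "openin (Fort_topology p) U \<longleftrightarrow> (p \<in> U \<longrightarrow> finite (- U))"
proof -
  have "istopology (\<lambda>U. p \<in> U \<longrightarrow> finite (- U))"
    unfolding istopology_def by (auto intro: finite_subset)
  then show ?thesis
    by (simp add: Fort_topology_def)
qed

lemma topspace_Fort_topology [simp]: "topspace (Fort_topology p) = UNIV"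
  by (metis openin_Fort_topology openin_subset Compl_UNIV_eq finite.emptyI
      subset_antisym top_greatest)

lemma openin_Fort_topology_singleton: "x \<noteq> p \<Longrightarrow> openin (Fort_topology p) {x}"
  by (simp add: openin_Fort_topology)

lemma compact_space_Fort_topology: "compact_space (Fort_topology p)"
  unfolding compact_space_def compactin_def
proof safe
  fix \<U> assume \<U>: "\<forall>U\<in>\<U>. openin (Fort_topology p) U" "topspace (Fort_topology p) \<subseteq> \<Union>\<U>"
  have "\<forall>x. \<exists>U. U \<in> \<U> \<and> x \<in> U"
    using \<U>(2) by auto
  then obtain f where f: "\<And>x. f x \<in> \<U> \<and> x \<in> f x"
    by metis
  have "finite (- f p)"
    using \<U>(1) f[of p] by (auto simp: openin_Fort_topology)
  moreover have "f ` insert p (- f p) \<subseteq> \<U>"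
    using f by auto
  moreover have "topspace (Fort_topology p) \<subseteq> \<Union> (f ` insert p (- f p))"
    using f by auto
  ultimately show "\<exists>\<F>. finite \<F> \<and> \<F> \<subseteq> \<U> \<and> topspace (Fort_topology p) \<subseteq> \<Union>\<F>"
    by (meson finite_imageI finite_insert)
qed

lemma Hausdorff_space_Fort_topology: "Hausdorff_space (Fort_topology p)"
  unfolding Hausdorff_space_def
proof safe
  fix x y :: 'a assume "x \<noteq> y"
  then consider "x \<noteq> p" | "y \<noteq> p"
    by blast
  then show "\<exists>U V. openin (Fort_topology p) U \<and> openin (Fort_topology p) V \<and> x \<in> U \<and> y \<in> V \<and> disjnt U V"
  proof cases
    case 1
    then show ?thesis using \<open>x \<noteq> y\<close>
      by (intro exI[of _ "{x}"] exI[of _ "- {x}"]) (auto simp: openin_Fort_topology disjnt_def)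
  next
    case 2
    then show ?thesis using \<open>x \<noteq> y\<close>
      by (intro exI[of _ "- {y}"] exI[of _ "{y}"]) (auto simp: openin_Fort_topology disjnt_def)
  qed
qed

lemma uncountable_isolated_points_near_Fort_point:
  fixes p :: 'a
  assumes "uncountable (UNIV :: 'a set)" "openin (Fort_topology p) W" "p \<in> W"
  shows "uncountable {y \<in> W. openin (Fort_topology p) {y}}"
proof
  have "finite (insert p (- W))"
    using assms(2,3) by (simp add: openin_Fort_topology)
  moreover assume "countable {y \<in> W. openin (Fort_topology p) {y}}"
  ultimately have "countable ({y \<in> W. openin (Fort_topology p) {y}} \<union> insert p (- W))"
    by (simp add: countable_finite)
  also have "{y \<in> W. openin (Fort_topology p) {y}} \<union> insert p (- W) = UNIV"
    by (auto simp: openin_Fort_topology_singleton)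
  finally show False
    using assms(1) by simp
qed

text \<open>The pair groupoid \<open>X \<times> X\<close>, with arrows coded by a bijection \<open>h\<close> so that they may
  live in the same type as the objects.\<close>

locale pair_groupoid_coding =
  fixes h :: "'g \<Rightarrow> 'x \<times> 'x" and TX :: "'x topology"
  assumes bij_h: "bij h" and topspace_TX [simp]: "topspace TX = UNIV"
begin

definition pair_range :: "'g \<Rightarrow> 'x" where "pair_range = (\<lambda>a. fst (h a))"
definition pair_source :: "'g \<Rightarrow> 'x" where "pair_source = (\<lambda>a. snd (h a))"
definition pair_unit :: "'x \<Rightarrow> 'g" where "pair_unit = (\<lambda>x. inv h (x, x))"
definition pair_mult :: "'g \<Rightarrow> 'g \<Rightarrow> 'g" where
  "pair_mult = (\<lambda>a b. inv h (fst (h a), snd (h b)))"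
definition pair_inverse :: "'g \<Rightarrow> 'g" where
  "pair_inverse = (\<lambda>a. inv h (snd (h a), fst (h a)))"
definition pair_topology :: "'g topology" where
  "pair_topology = pullback_topology UNIV h (prod_topology TX TX)"

lemma h_inv_h [simp]: "h (inv h p) = p"
  using bij_h by (simp add: bij_is_surj surj_f_inv_f)

lemma inv_h_h [simp]: "inv h (h a) = a"
  using bij_h by (simp add: bij_is_inj)

lemma groupoid_pair:
  "groupoid UNIV UNIV pair_range pair_source pair_unit pair_mult pair_inverse"
  by (simp add: groupoid_def pair_range_def pair_source_def pair_unit_def pair_mult_def
      pair_inverse_def)

lemma topspace_pair_topology [simp]: "topspace pair_topology = UNIV"
  by (simp add: pair_topology_def topspace_pullback_topology)

lemma homeomorphic_maps_pair: "homeomorphic_maps pair_topology (prod_topology TX TX) h (inv h)"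
proof -
  have "continuous_map pair_topology (prod_topology TX TX) h"
    using continuous_map_pullback[of "prod_topology TX TX" _ id UNIV h]
    by (simp add: pair_topology_def)
  moreover have "continuous_map (prod_topology TX TX) pair_topology (inv h)"
    unfolding pair_topology_def by (rule continuous_map_pullback') (simp_all add: o_def)
  ultimately show ?thesis
    by (simp add: homeomorphic_maps_def)
qed

lemma homeomorphic_map_pair: "homeomorphic_map pair_topology (prod_topology TX TX) h"
  and homeomorphic_map_pair_inv: "homeomorphic_map (prod_topology TX TX) pair_topology (inv h)"
  using homeomorphic_maps_pair by (simp_all add: homeomorphic_maps_map)

lemma pair_topology_homeomorphic: "pair_topology homeomorphic_space prod_topology TX TX"
  using homeomorphic_maps_pair homeomorphic_space_def by blast

lemma continuous_map_pair_components:
  "continuous_map pair_topology TX pair_range" "continuous_map pair_topology TX pair_source"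
  using continuous_map_compose[OF homeomorphic_imp_continuous_map[OF homeomorphic_map_pair]
      continuous_map_fst]
    continuous_map_compose[OF homeomorphic_imp_continuous_map[OF homeomorphic_map_pair]
      continuous_map_snd]
  by (simp_all add: pair_range_def pair_source_def o_def)

lemma continuous_map_into_pair_topology:
  assumes "continuous_map T TX f" "continuous_map T TX g"
  shows "continuous_map T pair_topology (\<lambda>t. inv h (f t, g t))"
  using continuous_map_compose[OF continuous_map_pairedI[OF assms]
      homeomorphic_imp_continuous_map[OF homeomorphic_map_pair_inv]]
  by (simp add: o_def)

lemma topological_groupoid_pair:
  "topological_groupoid pair_topology TX pair_range pair_source pair_unit pair_mult pair_inverse"
proof -
  note components = continuous_map_pair_components
  have "continuous_map (prod_topology pair_topology pair_topology) pair_topology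
          (\<lambda>(a, b). pair_mult a b)"
    using continuous_map_into_pair_topology[OF
        continuous_map_compose[OF continuous_map_fst components(1)]
        continuous_map_compose[OF continuous_map_snd components(2)]]
    by (simp add: pair_mult_def pair_range_def pair_source_def o_def case_prod_unfold)
  then show ?thesis
    using components groupoid_pair
      continuous_map_into_pair_topology[OF continuous_map_id continuous_map_id]
      continuous_map_into_pair_topology[OF components(2) components(1)]
    by (simp add: topological_groupoid_def continuous_map_from_subtopology id_def
        pair_unit_def pair_inverse_def pair_range_def pair_source_def)
qed

lemma locally_compact_groupoid_pair:
  assumes "locally_compact_space TX" "Hausdorff_space TX"
  shows "locally_compact_groupoid pair_topology TX pair_range pair_source pair_unit pair_mult
           pair_inverse"
  using assms topological_groupoid_pair
    homeomorphic_locally_compact_space[OF pair_topology_homeomorphic]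
    homeomorphic_Hausdorff_space[OF pair_topology_homeomorphic]
  by (simp add: locally_compact_groupoid_def locally_compact_space_prod_topology
      Hausdorff_space_prod_topology)

lemma compact_space_pair_topology: "compact_space TX \<Longrightarrow> compact_space pair_topology"
  using homeomorphic_compact_space[OF pair_topology_homeomorphic]
  by (simp add: compact_space_prod_topology)

lemma open_map_pair_range: "open_map pair_topology TX pair_range"
  using open_map_compose[OF homeomorphic_imp_open_map[OF homeomorphic_map_pair] open_map_fst]
  by (simp add: pair_range_def o_def)

lemma openin_pair_topology_iff: "openin pair_topology U \<longleftrightarrow> openin (prod_topology TX TX) (h ` U)"
  using homeomorphic_map_openness_eq[OF homeomorphic_map_pair] by simp

lemma openin_pair_singleton:
  assumes "openin TX {x}" "openin TX {y}"
  shows "openin pair_topology {inv h (x, y)}"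
proof -
  have "h ` {inv h (x, y)} = {x} \<times> {y}"
    by simp
  then show ?thesis
    using assms openin_prod_Times_iff[of TX TX "{x}" "{y}"] by (simp add: openin_pair_topology_iff)
qed

theorem not_haar_system_pair:
  assumes x: "openin TX {x}"
    and p: "\<And>W. openin TX W \<Longrightarrow> p \<in> W \<Longrightarrow> uncountable {y \<in> W. openin TX {y}}"
  shows "\<not> haar_system pair_topology TX pair_range pair_source m \<mu>"
proof
  assume "haar_system pair_topology TX pair_range pair_source m \<mu>"
  then have radon: "radon_measure pair_topology (\<mu> x)"
    and support: "measure_support pair_topology (\<mu> x) = {a. pair_range a = x}"
    by (auto simp: haar_system_def)
  have "\<forall>a\<in>topspace pair_topology. \<exists>U. openin pair_topology U \<and> a \<in> U \<and> emeasure (\<mu> x) U < \<infinity>"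
    using radon unfolding radon_measure_def by (elim conjE)
  then obtain U where U: "openin pair_topology U" "inv h (x, p) \<in> U" "emeasure (\<mu> x) U < \<infinity>"
    by auto
  have "openin (prod_topology TX TX) (h ` U)" "(x, p) \<in> h ` U"
    using U(1,2) openin_pair_topology_iff image_eqI[of "(x, p)" h "inv h (x, p)"] by simp_all
  then obtain W1 W2 where W: "openin TX W2" "p \<in> W2" "W1 \<times> W2 \<subseteq> h ` U" "x \<in> W1"
    unfolding openin_prod_topology_alt by blast
  let ?S = "{y \<in> W2. openin TX {y}}"
  have "inv h (x, y) \<in> U" if "y \<in> W2" for y
  proof -
    obtain a where "a \<in> U" "(x, y) = h a"
      using W(3,4) \<open>y \<in> W2\<close> by blast
    then show ?thesis
      by simp
  qed
  then have "(\<lambda>y. inv h (x, y)) ` ?S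
          \<subseteq> {a \<in> U \<inter> measure_support pair_topology (\<mu> x). openin pair_topology {a}}"
    using x support by (auto simp: pair_range_def openin_pair_singleton)
  then have "countable ((\<lambda>y. inv h (x, y)) ` ?S)"
    using countable_isolated_support_in_finite_open[OF radon U(1,3)] countable_subset by blast
  moreover have "inj_on (\<lambda>y. inv h (x, y)) ?S"
    by (rule inj_onI) (metis h_inv_h snd_conv)
  ultimately have "countable ?S"
    by (rule countable_image_inj_on)
  then show False
    using p[OF W(1,2)] by contradiction
qed

end

lemma bij_real_to_real_pairs: "\<exists>h :: real \<Rightarrow> real \<times> real. bij h"
proof -
  have "\<exists>f. bij_betw f (UNIV :: (real \<times> real) set) (UNIV :: real set)"
    using card_of_Times_same_infinite[OF infinite_UNIV_char_0]
    by (subst card_of_ordIso) simp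
  then show ?thesis
    using bij_imp_bij_inv by blast
qed

theorem proposition2p2:
  shows "\<exists>(TG :: real topology) (TX :: real topology) r s e m iv.
           locally_compact_groupoid TG TX r s e m iv \<and>
           compact_space TG \<and>
           open_map TG TX r \<and>
           \<not> (\<exists>\<mu>. haar_system TG TX r s m \<mu>)"
proof -
  obtain h :: "real \<Rightarrow> real \<times> real" where "bij h"
    using bij_real_to_real_pairs by blast
  interpret G: pair_groupoid_coding h "Fort_topology 0"
    by unfold_locales (simp_all add: \<open>bij h\<close>)
  show ?thesis
  proof (intro exI conjI)
    show "locally_compact_groupoid G.pair_topology (Fort_topology 0) G.pair_range
      G.pair_source G.pair_unit G.pair_mult G.pair_inverse"
      by (intro G.locally_compact_groupoid_pair compact_imp_locally_compact_space
          compact_space_Fort_topology Hausdorff_space_Fort_topology)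
    show "compact_space G.pair_topology"
      by (rule G.compact_space_pair_topology[OF compact_space_Fort_topology])
    show "open_map G.pair_topology (Fort_topology 0) G.pair_range"
      by (rule G.open_map_pair_range)
    have "\<not> haar_system G.pair_topology (Fort_topology 0) G.pair_range G.pair_source G.pair_mult \<mu>"
      for \<mu>
      by (rule G.not_haar_system_pair[of 1 0]) (simp_all add: openin_Fort_topology_singleton
          uncountable_isolated_points_near_Fort_point[OF uncountable_UNIV_real])
    then show "\<nexists>\<mu>. haar_system G.pair_topology (Fort_topology 0) G.pair_range G.pair_source G.pair_mult \<mu>"
      by blast
  qed
qed

end
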